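(* Let $I\subset\mathbb{R}$ be an interval with $0\in I$. Suppose $\phi_{\tau,t}$ is generated by a time-dependent vector field of the form $(1,H_t)^T$ on $\mathbb{R}^+\times\Omega$, where $H_t$ has a formal $\tau$-series $H_t=\sum_{n\ge0}\frac{\tau^n}{n!}H_{n,t}$ on this region for all $\tau\in I$. Then $$\pi\circ\phi_{\tau,t}\circ\mathcal{I}_t=\mathrm{Id}_{\mathbb{R}^N}+\mathcal{T}_{H_t}(\tau)\cdot H_t\quad\text{on }I\times\mathbb{R}^+\times\Omega .$$
   Context: $\Omega\subset\mathbb{R}^N$ open. $\pi(t,x)=x$, $\mathcal{I}_t(x)=(t,x)$. For fixed $t$, $\phi_{\tau,t}$ is the flow in $\tau$ (with $\phi_{0,t}=\mathrm{Id}$) of $\frac{d\phi}{d\tau}=(1,H_t)^T\circ\phi$, whose first component evolves as $\tau$ and whose remaining components solve $\frac{d\xi}{d\tau}=H_t(\tau,\xi)$. $H_t$-transformation: for time-dependent vector fields $F_t=\sum_n\frac{\tau^n}{n!}F_{n,t}$ and $H_t=\sum_n\frac{\tau^n}{n!}H_{n,t}$ on $\mathbb{R}^N$ (formal $\tau$-series), define recursively $F^{[0]}_n=F_{n,t}$ and $F^{[i+1]}_n=F^{[i]}_{n+1}+\sum_{k=0}^nC_n^k\,D_\xi F^{[i]}_k\cdot H_{n-k,t}$ for $i\ge0$ ($C_n^k$ binomial coefficients, $D_\xi$ Jacobian in $\xi$), and set $\mathcal{T}_{H_t}(\tau)\cdot F_t=\sum_{n\ge0}\frac{\tau^{n+1}}{(n+1)!}F^{[n]}_{0,t}$.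 The identity is an identity of formal series in $\tau$. *)

theory Defs
  imports "HOL-Analysis.Analysis"
begin

fun Ck_on :: "nat \<Rightarrow> 'a set \<Rightarrow> ('a::real_normed_vector \<Rightarrow> 'b::real_normed_vector) \<Rightarrow> bool" where
  "Ck_on 0 S f = continuous_on S f"
| "Ck_on (Suc k) S f =
     (\<exists>f'. (\<forall>x\<in>S. (f has_derivative f' x) (at x within S)) \<and> (\<forall>v. Ck_on k S (\<lambda>x. f' x v)))"

definition smooth_on :: "'a set \<Rightarrow> ('a::real_normed_vector \<Rightarrow> 'b::real_normed_vector) \<Rightarrow> bool" where
  "smooth_on S f \<longleftrightarrow> (\<forall>k. Ck_on k S f)"

definition nth_vderiv :: "nat \<Rightarrow> real set \<Rightarrow> (real \<Rightarrow> 'a::real_normed_vector) \<Rightarrow> real \<Rightarrow> 'a" where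
  "nth_vderiv n S f = ((\<lambda>g s. vector_derivative g (at s within S)) ^^ n) f"

primrec Fbr :: "(nat \<Rightarrow> 'a \<Rightarrow> 'a) \<Rightarrow> (nat \<Rightarrow> 'a \<Rightarrow> 'a) \<Rightarrow> nat \<Rightarrow> nat \<Rightarrow> 'a::euclidean_space \<Rightarrow> 'a" where
  "Fbr F Hs 0 = F"
| "Fbr F Hs (Suc i) = (\<lambda>n \<xi>. Fbr F Hs i (Suc n) \<xi>
      + (\<Sum>k\<le>n. of_nat (n choose k) *\<^sub>R frechet_derivative (Fbr F Hs i k) (at \<xi>) (Hs (n - k) \<xi>)))"

text \<open>The m-th Taylor coefficient (w.r.t. tau^m/m!) of the formal series
  T_H(tau).F = sum_n tau^(n+1)/(n+1)! F^[n]_0.\<close>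
definition Htrans_coeff :: "(nat \<Rightarrow> 'a \<Rightarrow> 'a) \<Rightarrow> (nat \<Rightarrow> 'a \<Rightarrow> 'a) \<Rightarrow> nat \<Rightarrow> 'a::euclidean_space \<Rightarrow> 'a" where
  "Htrans_coeff Hs F m = (if m = 0 then (\<lambda>_. 0) else Fbr F Hs (m - 1) 0)"

end

theory Submission
  imports Defs
begin

text \<open>Write \<open>h(\<tau>, \<xi>) = H\<^sub>t(\<tau>, \<xi>)\<close>. Along a solution of \<open>y' = h(\<tau>, y)\<close>, the derivative
  of order \<open>j + 1\<close> is \<open>G\<^sub>j(\<tau>, y(\<tau>))\<close>, where \<open>G\<^sub>0 = h\<close> and \<open>G\<^sub>j\<^sub>+\<^sub>1 = \<partial>\<^sub>\<tau>G\<^sub>j + D\<^sub>\<xi>G\<^sub>j \<cdot> h\<close>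
  is the derivative along the field \<open>(1, h)\<close>. The Leibniz rule
  \<open>\<partial>\<^sub>\<tau>\<^sup>n(D\<^sub>\<xi>G \<cdot> h) = \<Sum>\<^sub>k C(n,k) D\<^sub>\<xi>(\<partial>\<^sub>\<tau>\<^sup>kG) \<cdot> \<partial>\<^sub>\<tau>\<^sup>n\<^sup>-\<^sup>kh\<close>, which rests on the symmetry of mixed
  partial derivatives, shows that \<open>\<partial>\<^sub>\<tau>\<^sup>nG\<^sub>i\<close> at \<open>\<tau> = 0\<close> satisfies the recursion defining
  \<open>F\<^sup>[\<^sup>i\<^sup>]\<^sub>n\<close>. Hence \<open>F\<^sup>[\<^sup>j\<^sup>]\<^sub>0 = G\<^sub>j(0, \<cdot>)\<close>, which identifies the Taylor coefficients of the
  flow at \<open>\<tau> = 0\<close> with those of \<open>T\<^sub>H(\<tau>) \<cdot> H\<close>.\<close>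

lemma Ck_on_cong:
  assumes "\<And>x. x \<in> S \<Longrightarrow> f x = g x" and "Ck_on k S f"
  shows "Ck_on k S g"
  using assms
proof (induction k arbitrary: f g)
  case 0
  then show ?case using continuous_on_cong by force
next
  case (Suc k)
  then obtain f' where f': "\<forall>x\<in>S. (f has_derivative f' x) (at x within S)"
    and Ck: "\<forall>v. Ck_on k S (\<lambda>x. f' x v)"
    by auto
  have "\<forall>x\<in>S. (g has_derivative f' x) (at x within S)"
    using f' Suc.prems(1) has_derivative_transform[of _ S g f] by auto
  with Ck show ?case by auto
qed

lemma Ck_on_SucD: "Ck_on (Suc k) S f \<Longrightarrow> Ck_on k S f"
proof (induction k arbitrary: f)
  case 0
  then obtain f' where "\<forall>x\<in>S. (f has_derivative f' x) (at x within S)" by auto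
  then show ?case
    by (auto simp: continuous_on_eq_continuous_within intro: has_derivative_continuous)
next
  case (Suc k)
  then obtain f' where f': "\<forall>x\<in>S. (f has_derivative f' x) (at x within S)"
    and "\<forall>v. Ck_on (Suc k) S (\<lambda>x. f' x v)"
    by auto
  with Suc.IH have "\<forall>v. Ck_on k S (\<lambda>x. f' x v)" by blast
  with f' show ?case by (simp only: Ck_on.simps) blast
qed

lemma Ck_on_const: "Ck_on k S (\<lambda>x. c)"
proof (induction k arbitrary: c)
  case 0 then show ?case by simp
next
  case (Suc k)
  then show ?case by (auto intro!: exI[of _ "\<lambda>x v. 0"])
qed

lemma Ck_on_add: "Ck_on k S f \<Longrightarrow> Ck_on k S g \<Longrightarrow> Ck_on k S (\<lambda>x. f x + g x)"
proof (induction k arbitrary: f g)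
  case 0 then show ?case by (simp add: continuous_on_add)
next
  case (Suc k)
  from Suc.prems obtain f' g'
    where f': "\<forall>x\<in>S. (f has_derivative f' x) (at x within S)" "\<forall>v. Ck_on k S (\<lambda>x. f' x v)"
      and g': "\<forall>x\<in>S. (g has_derivative g' x) (at x within S)" "\<forall>v. Ck_on k S (\<lambda>x. g' x v)"
    by auto
  have "\<forall>x\<in>S. ((\<lambda>x. f x + g x) has_derivative (\<lambda>v. f' x v + g' x v)) (at x within S)"
    using f' g' by (auto intro: has_derivative_add)
  then show ?case using Suc.IH f'(2) g'(2) by auto
qed

lemma Ck_on_bounded_linear: "bounded_linear L \<Longrightarrow> Ck_on k S f \<Longrightarrow> Ck_on k S (\<lambda>x. L (f x))"
proof (induction k arbitrary: f)
  case 0 then show ?case by (simp add: bounded_linear.continuous_on)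
next
  case (Suc k)
  from Suc.prems obtain f'
    where f': "\<forall>x\<in>S. (f has_derivative f' x) (at x within S)" "\<forall>v. Ck_on k S (\<lambda>x. f' x v)"
    by auto
  have "\<forall>x\<in>S. ((\<lambda>x. L (f x)) has_derivative (\<lambda>v. L (f' x v))) (at x within S)"
    using f' Suc.prems(1) bounded_linear.has_derivative by blast
  then show ?case using Suc f'(2) by auto
qed

lemma Ck_on_scaleR: "Ck_on k S a \<Longrightarrow> Ck_on k S f \<Longrightarrow> Ck_on k S (\<lambda>x. a x *\<^sub>R f x)"
proof (induction k arbitrary: a f)
  case 0 then show ?case by (simp add: continuous_on_scaleR)
next
  case (Suc k)
  from Suc.prems obtain f' a'
    where f': "\<forall>x\<in>S. (f has_derivative f' x) (at x within S)" "\<forall>v. Ck_on k S (\<lambda>x. f' x v)"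
      and a': "\<forall>x\<in>S. (a has_derivative a' x) (at x within S)" "\<forall>v. Ck_on k S (\<lambda>x. a' x v)"
    by auto
  have "\<forall>x\<in>S. ((\<lambda>x. a x *\<^sub>R f x) has_derivative (\<lambda>v. a x *\<^sub>R f' x v + a' x v *\<^sub>R f x)) (at x within S)"
    using f' a' by (auto intro: has_derivative_scaleR)
  moreover have "Ck_on k S (\<lambda>x. a x *\<^sub>R f' x v + a' x v *\<^sub>R f x)" for v
  proof -
    have "Ck_on k S a" "Ck_on k S f" using Suc.prems Ck_on_SucD by blast+
    then show ?thesis using Suc.IH f'(2) a'(2) Ck_on_add by blast
  qed
  ultimately show ?case by auto
qed

lemma Ck_on_sum:
  "finite A \<Longrightarrow> (\<And>i. i \<in> A \<Longrightarrow> Ck_on k S (f i)) \<Longrightarrow> Ck_on k S (\<lambda>x. \<Sum>i\<in>A. f i x)"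
  by (induction A rule: finite_induct) (simp_all add: Ck_on_const Ck_on_add)

lemma smooth_on_cong: "smooth_on S f \<Longrightarrow> (\<And>x. x \<in> S \<Longrightarrow> f x = g x) \<Longrightarrow> smooth_on S g"
  unfolding smooth_on_def using Ck_on_cong by blast

lemma smooth_on_imp_continuous_on: "smooth_on S f \<Longrightarrow> continuous_on S f"
  unfolding smooth_on_def by (drule spec[of _ 0]) simp

lemma smooth_on_add: "smooth_on S f \<Longrightarrow> smooth_on S g \<Longrightarrow> smooth_on S (\<lambda>x. f x + g x)"
  by (simp add: smooth_on_def Ck_on_add)

lemma smooth_on_scaleR: "smooth_on S a \<Longrightarrow> smooth_on S f \<Longrightarrow> smooth_on S (\<lambda>x. a x *\<^sub>R f x)"
  by (simp add: smooth_on_def Ck_on_scaleR)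

lemma smooth_on_bounded_linear:
  "bounded_linear L \<Longrightarrow> smooth_on S f \<Longrightarrow> smooth_on S (\<lambda>x. L (f x))"
  by (simp add: smooth_on_def Ck_on_bounded_linear)

lemma smooth_on_sum:
  "finite A \<Longrightarrow> (\<And>i. i \<in> A \<Longrightarrow> smooth_on S (f i)) \<Longrightarrow> smooth_on S (\<lambda>x. \<Sum>i\<in>A. f i x)"
  by (simp add: smooth_on_def Ck_on_sum)

lemma binomial_sum_Suc:
  fixes f :: "nat \<Rightarrow> nat \<Rightarrow> 'v::real_vector"
  shows "(\<Sum>k\<le>n. of_nat (n choose k) *\<^sub>R (f (Suc k) (n - k) + f k (Suc (n - k))))
       = (\<Sum>k\<le>Suc n. of_nat (Suc n choose k) *\<^sub>R f k (Suc n - k))"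
proof -
  have shift: "(\<Sum>k\<le>n. of_nat (n choose k) *\<^sub>R f k (Suc (n - k)))
      = f 0 (Suc n) + (\<Sum>k\<le>n. of_nat (n choose Suc k) *\<^sub>R f (Suc k) (n - k))"
  proof -
    have "(\<Sum>k\<le>n. of_nat (n choose k) *\<^sub>R f k (Suc (n - k)))
        = (\<Sum>k\<le>Suc n. of_nat (n choose k) *\<^sub>R f k (Suc n - k))"
      by (simp add: Suc_diff_le)
    also have "\<dots> = f 0 (Suc n) + (\<Sum>k\<le>n. of_nat (n choose Suc k) *\<^sub>R f (Suc k) (n - k))"
      by (subst sum.atMost_Suc_shift) simp
    finally show ?thesis .
  qed
  have pascal: "(\<Sum>k\<le>Suc n. of_nat (Suc n choose k) *\<^sub>R f k (Suc n - k)) = f 0 (Suc n)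
      + (\<Sum>k\<le>n. of_nat (n choose k) *\<^sub>R f (Suc k) (n - k) + of_nat (n choose Suc k) *\<^sub>R f (Suc k) (n - k))"
    by (subst sum.atMost_Suc_shift) (simp add: scaleR_left_distrib)
  have "(\<Sum>k\<le>n. of_nat (n choose k) *\<^sub>R (f (Suc k) (n - k) + f k (Suc (n - k))))
      = (\<Sum>k\<le>n. of_nat (n choose k) *\<^sub>R f (Suc k) (n - k))
        + (\<Sum>k\<le>n. of_nat (n choose k) *\<^sub>R f k (Suc (n - k)))"
    by (simp add: scaleR_right_distrib sum.distrib)
  also have "\<dots> = (\<Sum>k\<le>Suc n. of_nat (Suc n choose k) *\<^sub>R f k (Suc n - k))"
    unfolding shift pascal by (simp add: sum.distrib algebra_simps)
  finally show ?thesis .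
qed

lemma linear_euclidean_expansion:
  fixes L :: "'a::euclidean_space \<Rightarrow> 'c::real_normed_vector"
  assumes "linear L"
  shows "L w = (\<Sum>b\<in>Basis. (w \<bullet> b) *\<^sub>R L b)"
proof -
  have "L w = L (\<Sum>b\<in>Basis. (w \<bullet> b) *\<^sub>R b)" by (simp add: euclidean_representation)
  also have "\<dots> = (\<Sum>b\<in>Basis. (w \<bullet> b) *\<^sub>R L b)"
    using assms by (simp add: linear_sum linear_scale o_def)
  finally show ?thesis .
qed

locale interval_slab =
  fixes I :: "real set" and \<Omega> :: "'a::euclidean_space set"
  assumes open_\<Omega>: "open \<Omega>" and interval_I: "is_interval I"
    and nontrivial_I: "\<exists>a\<in>I. \<exists>b\<in>I. a < b"
begin

abbreviation D :: "(real \<times> 'a \<Rightarrow> 'c::real_normed_vector) \<Rightarrow> real \<times> 'a \<Rightarrow> real \<times> 'a \<Rightarrow> 'c" where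
  "D f p \<equiv> frechet_derivative f (at p within I \<times> \<Omega>)"

definition Dt :: "(real \<times> 'a \<Rightarrow> 'c::real_normed_vector) \<Rightarrow> real \<times> 'a \<Rightarrow> 'c" where
  "Dt f p = D f p (1, 0)"

lemma interval_around:
  assumes "s \<in> I"
  obtains a b where "a \<le> s" "s \<le> b" "a < b" "{a..b} \<subseteq> I"
proof -
  obtain a0 b0 where ab: "a0 \<in> I" "b0 \<in> I" "a0 < b0" using nontrivial_I by blast
  have mem: "min s a0 \<in> I" "max s b0 \<in> I" using ab assms by (auto simp: min_def max_def)
  have "{min s a0..max s b0} \<subseteq> I"
  proof
    fix y assume "y \<in> {min s a0..max s b0}"
    then show "y \<in> I" using mem_is_interval_1_I[OF interval_I mem] by auto
  qed
  moreover have "min s a0 \<le> s" "s \<le> max s b0" "min s a0 < max s b0" using ab by auto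
  ultimately show ?thesis using that by blast
qed

lemma at_within_I_nontrivial: "s \<in> I \<Longrightarrow> at s within I \<noteq> bot"
proof -
  assume "s \<in> I"
  then obtain a b where "a \<le> s" "s \<le> b" "a < b" "{a..b} \<subseteq> I" by (rule interval_around)
  then have "s islimpt I" using islimpt_subset[of s "{a..b}"] by auto
  then show ?thesis by (simp add: trivial_limit_within)
qed

text \<open>Derivatives within \<open>I \<times> \<Omega>\<close> are unique even at boundary points of \<open>I\<close>: every
  coordinate direction can be entered from inside.\<close>
lemma has_derivative_within_slab_unique:
  assumes "p \<in> I \<times> \<Omega>"
    and "(f has_derivative f1) (at p within I \<times> \<Omega>)" "(f has_derivative f2) (at p within I \<times> \<Omega>)"
  shows "f1 = f2"
proof (rule frechet_derivative_unique_within[OF assms(2,3)])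
  fix i :: "real \<times> 'a" and e :: real
  assume i: "i \<in> Basis" and e: "e > 0"
  obtain t x where p: "p = (t, x)" "t \<in> I" "x \<in> \<Omega>" using assms(1) by auto
  show "\<exists>d. 0 < \<bar>d\<bar> \<and> \<bar>d\<bar> < e \<and> p + d *\<^sub>R i \<in> I \<times> \<Omega>"
  proof (cases "i = (1, 0)")
    case True
    have "t islimpt I" using at_within_I_nontrivial[OF p(2)] by (simp add: trivial_limit_within)
    then obtain t' where "t' \<in> I" "t' \<noteq> t" "dist t' t < e"
      using e islimpt_approachable by blast
    then have "p + (t' - t) *\<^sub>R i \<in> I \<times> \<Omega>" using True p by simp
    moreover have "0 < \<bar>t' - t\<bar>" "\<bar>t' - t\<bar> < e" using \<open>t' \<noteq> t\<close> \<open>dist t' t < e\<close>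
      by (auto simp: dist_real_def)
    ultimately show ?thesis by (intro exI[of _ "t' - t"]) simp
  next
    case False
    then obtain v where v: "i = (0, v)" "v \<in> Basis" using i by (auto simp: Basis_prod_def)
    obtain r where r: "r > 0" "ball x r \<subseteq> \<Omega>" using open_\<Omega> p(3) open_contains_ball by blast
    have "dist x (x + (min e r / 2) *\<^sub>R v) < r"
      using r(1) e v(2) by (simp add: dist_norm)
    then have "x + (min e r / 2) *\<^sub>R v \<in> \<Omega>" using r(2) by auto
    then have "p + (min e r / 2) *\<^sub>R i \<in> I \<times> \<Omega>" using p v by simp
    moreover have "0 < \<bar>min e r / 2\<bar>" "\<bar>min e r / 2\<bar> < e" using e r(1) by auto
    ultimately show ?thesis by (intro exI[of _ "min e r / 2"]) simp
  qed
qed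

lemma D_eq:
  assumes "p \<in> I \<times> \<Omega>" "(f has_derivative f') (at p within I \<times> \<Omega>)"
  shows "D f p = f'"
proof -
  have "(f has_derivative D f p) (at p within I \<times> \<Omega>)"
    using assms(2) by (simp add: frechet_derivative_works[symmetric] differentiableI)
  with assms show ?thesis using has_derivative_within_slab_unique by blast
qed

lemma D_cong: "p \<in> I \<times> \<Omega> \<Longrightarrow> (\<And>q. q \<in> I \<times> \<Omega> \<Longrightarrow> f q = g q) \<Longrightarrow> D f p = D g p"
proof -
  assume "p \<in> I \<times> \<Omega>" "\<And>q. q \<in> I \<times> \<Omega> \<Longrightarrow> f q = g q"
  then have "(f has_derivative f') (at p within I \<times> \<Omega>) \<longleftrightarrow> (g has_derivative f') (at p within I \<times> \<Omega>)" for f'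
    using has_derivative_transform[of p "I \<times> \<Omega>" f g f'] has_derivative_transform[of p "I \<times> \<Omega>" g f f']
    by auto
  then show ?thesis unfolding frechet_derivative_def by simp
qed

lemma has_derivative_D:
  assumes "smooth_on (I \<times> \<Omega>) f" "p \<in> I \<times> \<Omega>"
  shows "(f has_derivative D f p) (at p within I \<times> \<Omega>)"
proof -
  have "Ck_on 1 (I \<times> \<Omega>) f" using assms(1) by (simp add: smooth_on_def)
  then obtain f' where "(f has_derivative f' p) (at p within I \<times> \<Omega>)" using assms(2) by auto
  moreover from this have "D f p = f' p" by (rule D_eq[OF assms(2)])
  ultimately show ?thesis by simp
qed

lemma linear_D: "smooth_on (I \<times> \<Omega>) f \<Longrightarrow> p \<in> I \<times> \<Omega> \<Longrightarrow> linear (D f p)"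
  using has_derivative_D has_derivative_linear by blast

lemma smooth_on_D: "smooth_on (I \<times> \<Omega>) f \<Longrightarrow> smooth_on (I \<times> \<Omega>) (\<lambda>q. D f q v)"
  unfolding smooth_on_def
proof
  fix k assume "\<forall>k. Ck_on k (I \<times> \<Omega>) f"
  then have "Ck_on (Suc k) (I \<times> \<Omega>) f" by blast
  then obtain f' where f': "\<forall>x\<in>I \<times> \<Omega>. (f has_derivative f' x) (at x within I \<times> \<Omega>)"
    and Ck: "\<forall>v. Ck_on k (I \<times> \<Omega>) (\<lambda>x. f' x v)"
    by auto
  have "D f x = f' x" if "x \<in> I \<times> \<Omega>" for x
    using D_eq[OF that] f' that by blast
  then show "Ck_on k (I \<times> \<Omega>) (\<lambda>q. D f q v)"
    by (intro Ck_on_cong[OF _ Ck[rule_format, of v]]) simp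
qed

lemma smooth_on_Dt: "smooth_on (I \<times> \<Omega>) f \<Longrightarrow> smooth_on (I \<times> \<Omega>) (Dt f)"
  unfolding Dt_def[abs_def] by (rule smooth_on_D)

lemma smooth_on_Dt_pow: "smooth_on (I \<times> \<Omega>) f \<Longrightarrow> smooth_on (I \<times> \<Omega>) ((Dt ^^ n) f)"
  by (induction n) (auto intro: smooth_on_Dt)

lemma Dt_add:
  "smooth_on (I \<times> \<Omega>) f \<Longrightarrow> smooth_on (I \<times> \<Omega>) g \<Longrightarrow> p \<in> I \<times> \<Omega> \<Longrightarrow>
    Dt (\<lambda>q. f q + g q) p = Dt f p + Dt g p"
  unfolding Dt_def by (subst D_eq[OF _ has_derivative_add[OF has_derivative_D has_derivative_D]]) auto

lemma Dt_scaleR: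
  "smooth_on (I \<times> \<Omega>) a \<Longrightarrow> smooth_on (I \<times> \<Omega>) f \<Longrightarrow> p \<in> I \<times> \<Omega> \<Longrightarrow>
    Dt (\<lambda>q. a q *\<^sub>R f q) p = a p *\<^sub>R Dt f p + Dt a p *\<^sub>R f p"
  unfolding Dt_def by (subst D_eq[OF _ has_derivative_scaleR[OF has_derivative_D has_derivative_D]]) auto

lemma Dt_bounded_linear:
  "bounded_linear L \<Longrightarrow> smooth_on (I \<times> \<Omega>) f \<Longrightarrow> p \<in> I \<times> \<Omega> \<Longrightarrow> Dt (\<lambda>q. L (f q)) p = L (Dt f p)"
  unfolding Dt_def by (subst D_eq[OF _ bounded_linear.has_derivative[OF _ has_derivative_D]]) auto

lemma Dt_sum:
  "finite A \<Longrightarrow> (\<And>i. i \<in> A \<Longrightarrow> smooth_on (I \<times> \<Omega>) (f i)) \<Longrightarrow> p \<in> I \<times> \<Omega> \<Longrightarrow>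
    Dt (\<lambda>q. \<Sum>i\<in>A. f i q) p = (\<Sum>i\<in>A. Dt (f i) p)"
  unfolding Dt_def by (subst D_eq[OF _ has_derivative_sum[OF has_derivative_D]]) auto

lemma Dt_cong:
  assumes "p \<in> I \<times> \<Omega>" "\<And>q. q \<in> I \<times> \<Omega> \<Longrightarrow> f q = g q"
  shows "Dt f p = Dt g p"
  using D_cong[OF assms] by (simp add: Dt_def)

lemma Dt_pow_add:
  assumes "smooth_on (I \<times> \<Omega>) f" "smooth_on (I \<times> \<Omega>) g"
  shows "p \<in> I \<times> \<Omega> \<Longrightarrow> (Dt ^^ n) (\<lambda>q. f q + g q) p = (Dt ^^ n) f p + (Dt ^^ n) g p"
proof (induction n arbitrary: p)
  case 0 then show ?case by simp
next
  case (Suc n)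
  have "(Dt ^^ Suc n) (\<lambda>q. f q + g q) p = Dt (\<lambda>q. (Dt ^^ n) f q + (Dt ^^ n) g q) p"
    using Dt_cong[OF Suc.prems Suc.IH] by simp
  also have "\<dots> = (Dt ^^ Suc n) f p + (Dt ^^ Suc n) g p"
    using Dt_add[OF smooth_on_Dt_pow[OF assms(1)] smooth_on_Dt_pow[OF assms(2)] Suc.prems] by simp
  finally show ?case .
qed

lemma has_vector_derivative_along_curve:
  assumes "smooth_on (I \<times> \<Omega>) F" "s \<in> I" "\<And>\<tau>. \<tau> \<in> I \<Longrightarrow> c \<tau> \<in> I \<times> \<Omega>"
    and "(c has_vector_derivative c') (at s within I)"
  shows "((\<lambda>\<tau>. F (c \<tau>)) has_vector_derivative D F (c s) c') (at s within I)"
proof -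
  have "c ` I \<subseteq> I \<times> \<Omega>" using assms(3) by blast
  from has_derivative_in_compose2[OF has_derivative_D[OF assms(1)] this assms(2)
      assms(4)[unfolded has_vector_derivative_def]]
  have "((\<lambda>\<tau>. F (c \<tau>)) has_derivative (\<lambda>y. D F (c s) (y *\<^sub>R c'))) (at s within I)" .
  moreover have "linear (D F (c s))" using linear_D assms by blast
  ultimately show ?thesis unfolding has_vector_derivative_def by (simp add: linear_scale)
qed

lemma has_vector_derivative_tau:
  assumes "smooth_on (I \<times> \<Omega>) F" "\<sigma> \<in> I" "\<zeta> \<in> \<Omega>"
  shows "((\<lambda>\<sigma>. F (\<sigma>, \<zeta>)) has_vector_derivative Dt F (\<sigma>, \<zeta>)) (at \<sigma> within I)"
proof -
  have "((\<lambda>\<tau>. (\<tau>, \<zeta>)) has_vector_derivative (1, 0)) (at \<sigma> within I)"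
    by (intro has_vector_derivative_Pair has_vector_derivative_id has_vector_derivative_const)
  from has_vector_derivative_along_curve[OF assms(1,2) _ this] assms(3)
  show ?thesis by (simp add: Dt_def)
qed

lemma has_derivative_xi:
  assumes "smooth_on (I \<times> \<Omega>) F" "\<sigma> \<in> I" "U \<subseteq> \<Omega>" "\<zeta> \<in> U"
  shows "((\<lambda>\<zeta>. F (\<sigma>, \<zeta>)) has_derivative (\<lambda>v. D F (\<sigma>, \<zeta>) (0, v))) (at \<zeta> within U)"
proof -
  have "((\<lambda>\<zeta>. (\<sigma>, \<zeta>)) has_derivative (\<lambda>v. (0, v))) (at \<zeta> within U)"
    by (auto intro!: derivative_eq_intros)
  moreover have "(\<lambda>\<zeta>. (\<sigma>, \<zeta>)) ` U \<subseteq> I \<times> \<Omega>" using assms(2,3) by auto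
  ultimately show ?thesis
    using has_derivative_in_compose2[OF has_derivative_D[OF assms(1)]] assms(4) by blast
qed

lemma continuous_on_tau_slice:
  "smooth_on (I \<times> \<Omega>) F \<Longrightarrow> T \<subseteq> I \<Longrightarrow> \<zeta> \<in> \<Omega> \<Longrightarrow> continuous_on T (\<lambda>\<sigma>. F (\<sigma>, \<zeta>))"
  by (rule continuous_on_compose2[OF smooth_on_imp_continuous_on]) (auto intro!: continuous_intros)

lemma nth_vderiv_tau_slice:
  assumes "smooth_on (I \<times> \<Omega>) F" "\<xi> \<in> \<Omega>"
  shows "s \<in> I \<Longrightarrow> nth_vderiv n I (\<lambda>\<tau>. F (\<tau>, \<xi>)) s = (Dt ^^ n) F (s, \<xi>)"
proof (induction n arbitrary: s)
  case 0
  then show ?case by (simp add: nth_vderiv_def)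
next
  case (Suc n)
  have "(nth_vderiv n I (\<lambda>\<tau>. F (\<tau>, \<xi>)) has_vector_derivative (Dt ^^ Suc n) F (s, \<xi>)) (at s within I)"
    using has_vector_derivative_transform[OF Suc.prems Suc.IH
        has_vector_derivative_tau[OF smooth_on_Dt_pow[OF assms(1)] Suc.prems assms(2)]]
    by simp
  then show ?case
    using vector_derivative_within[OF at_within_I_nontrivial[OF Suc.prems]] by (simp add: nth_vderiv_def)
qed

lemma tau_fundamental_theorem:
  fixes F :: "real \<times> 'a \<Rightarrow> 'c::banach"
  assumes "smooth_on (I \<times> \<Omega>) F" "a \<le> \<tau>" "{a..\<tau>} \<subseteq> I" "\<zeta> \<in> \<Omega>"
  shows "F (\<tau>, \<zeta>) = F (a, \<zeta>) + integral {a..\<tau>} (\<lambda>\<sigma>. Dt F (\<sigma>, \<zeta>))"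
proof -
  have "((\<lambda>\<sigma>. Dt F (\<sigma>, \<zeta>)) has_integral (F (\<tau>, \<zeta>) - F (a, \<zeta>))) {a..\<tau>}"
  proof (rule fundamental_theorem_of_calculus[where f = "\<lambda>\<sigma>. F (\<sigma>, \<zeta>)", OF assms(2)])
    fix \<sigma> assume "\<sigma> \<in> {a..\<tau>}"
    with assms have "((\<lambda>\<sigma>. F (\<sigma>, \<zeta>)) has_vector_derivative Dt F (\<sigma>, \<zeta>)) (at \<sigma> within I)"
      by (intro has_vector_derivative_tau) auto
    then show "((\<lambda>\<sigma>. F (\<sigma>, \<zeta>)) has_vector_derivative Dt F (\<sigma>, \<zeta>)) (at \<sigma> within {a..\<tau>})"
      by (rule has_vector_derivative_within_subset[OF _ assms(3)])
  qed
  then show ?thesis by (simp add: integral_unique)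
qed

lemma has_derivative_xi_integral:
  fixes A :: "real \<times> 'a \<Rightarrow> 'c::banach"
  assumes A: "smooth_on (I \<times> \<Omega>) A" and ab: "{a..b} \<subseteq> I"
    and U: "convex U" "U \<subseteq> \<Omega>" "\<xi> \<in> U"
  shows "((\<lambda>\<zeta>. integral {a..b} (\<lambda>\<sigma>. A (\<sigma>, \<zeta>))) has_derivative
      (\<lambda>v. integral {a..b} (\<lambda>\<sigma>. D A (\<sigma>, \<xi>) (0, v)))) (at \<xi> within U)"
proof -
  define A' where "A' = (\<lambda>\<zeta> \<sigma>. Blinfun (\<lambda>v. D A (\<sigma>, \<zeta>) (0, v)))"
  have A'_apply: "blinfun_apply (A' \<zeta> \<sigma>) = (\<lambda>v. D A (\<sigma>, \<zeta>) (0, v))" if "\<sigma> \<in> I" "\<zeta> \<in> U" for \<sigma> \<zeta>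
    unfolding A'_def
    by (rule bounded_linear_Blinfun_apply[OF has_derivative_bounded_linear[OF has_derivative_xi[OF A that(1) U(2) that(2)]]])
  have A'_cont: "continuous_on (U \<times> {a..b}) (\<lambda>(\<zeta>, \<sigma>). A' \<zeta> \<sigma>)"
  proof (rule continuous_on_blinfun_componentwise)
    fix i :: 'a
    have "continuous_on (U \<times> {a..b}) (\<lambda>x. D A (snd x, fst x) (0, i))"
    proof (rule continuous_on_compose2[OF smooth_on_imp_continuous_on[OF smooth_on_D[OF A]]])
      show "continuous_on (U \<times> {a..b}) (\<lambda>x. (snd x, fst x))" by (intro continuous_intros)
      show "(\<lambda>x. (snd x, fst x)) ` (U \<times> {a..b}) \<subseteq> I \<times> \<Omega>" using U(2) ab by auto
    qed
    then show "continuous_on (U \<times> {a..b}) (\<lambda>x. blinfun_apply (case x of (\<zeta>, \<sigma>) \<Rightarrow> A' \<zeta> \<sigma>) i)"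
      by (rule continuous_on_cong[THEN iffD1, rotated 2]) (use A'_apply ab in auto)
  qed
  have "((\<lambda>\<zeta>. integral (cbox a b) (\<lambda>\<sigma>. A (\<sigma>, \<zeta>))) has_derivative
      blinfun_apply (integral (cbox a b) (A' \<xi>))) (at \<xi> within U)"
  proof (rule leibniz_rule[where f = "\<lambda>\<zeta> \<sigma>. A (\<sigma>, \<zeta>)" and fx = A'])
    fix \<zeta> \<sigma> assume \<zeta>: "\<zeta> \<in> U" and "\<sigma> \<in> cbox a b"
    then have \<sigma>: "\<sigma> \<in> I" using ab by auto
    show "((\<lambda>\<zeta>. A (\<sigma>, \<zeta>)) has_derivative blinfun_apply (A' \<zeta> \<sigma>)) (at \<zeta> within U)"
      using has_derivative_xi[OF A \<sigma> U(2) \<zeta>] A'_apply[OF \<sigma> \<zeta>] by simp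
  next
    fix \<zeta> assume "\<zeta> \<in> U"
    then have "continuous_on {a..b} (\<lambda>\<sigma>. A (\<sigma>, \<zeta>))"
      using continuous_on_tau_slice[OF A ab] U(2) by blast
    then show "(\<lambda>\<sigma>. A (\<sigma>, \<zeta>)) integrable_on cbox a b"
      by (simp add: integrable_continuous_interval)
  qed (use A'_cont U in simp_all)
  moreover have "blinfun_apply (integral {a..b} (A' \<xi>)) = (\<lambda>v. integral {a..b} (\<lambda>\<sigma>. D A (\<sigma>, \<xi>) (0, v)))"
  proof
    fix v
    have "continuous_on {a..b} (A' \<xi>)"
    proof (rule continuous_on_blinfun_componentwise)
      fix i :: 'a
      have "continuous_on {a..b} (\<lambda>\<sigma>. D A (\<sigma>, \<xi>) (0, i))"
        using continuous_on_tau_slice[OF smooth_on_D[OF A] ab] U(2,3) by blast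
      then show "continuous_on {a..b} (\<lambda>\<sigma>. blinfun_apply (A' \<xi> \<sigma>) i)"
        by (rule continuous_on_cong[THEN iffD1, rotated 2]) (use A'_apply U(3) ab in auto)
    qed
    then have "blinfun_apply (integral {a..b} (A' \<xi>)) v = integral {a..b} (\<lambda>\<sigma>. blinfun_apply (A' \<xi> \<sigma>) v)"
      by (intro blinfun_apply_integral integrable_continuous_interval)
    also have "\<dots> = integral {a..b} (\<lambda>\<sigma>. D A (\<sigma>, \<xi>) (0, v))"
      by (rule integral_cong) (use A'_apply U(3) ab in auto)
    finally show "blinfun_apply (integral {a..b} (A' \<xi>)) v = integral {a..b} (\<lambda>\<sigma>. D A (\<sigma>, \<xi>) (0, v))" .
  qed
  ultimately show ?thesis by simp
qed

lemma D_xi_tau_integral: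
  fixes F :: "real \<times> 'a \<Rightarrow> 'c::banach"
  assumes F: "smooth_on (I \<times> \<Omega>) F" and "a \<le> \<tau>" "{a..\<tau>} \<subseteq> I" "\<xi> \<in> \<Omega>"
  shows "D F (\<tau>, \<xi>) (0, w) = D F (a, \<xi>) (0, w) + integral {a..\<tau>} (\<lambda>\<sigma>. D (Dt F) (\<sigma>, \<xi>) (0, w))"
proof -
  obtain r where "r > 0" "ball \<xi> r \<subseteq> \<Omega>" using open_\<Omega> assms(4) open_contains_ball by blast
  define U where "U = ball \<xi> r"
  have U: "open U" "convex U" "\<xi> \<in> U" "U \<subseteq> \<Omega>"
    using \<open>r > 0\<close> \<open>ball \<xi> r \<subseteq> \<Omega>\<close> by (auto simp: U_def)
  have a: "a \<in> I" "\<tau> \<in> I" using assms(2,3) by auto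
  have "((\<lambda>\<zeta>. F (a, \<zeta>) + integral {a..\<tau>} (\<lambda>\<sigma>. Dt F (\<sigma>, \<zeta>))) has_derivative
      (\<lambda>v. D F (a, \<xi>) (0, v) + integral {a..\<tau>} (\<lambda>\<sigma>. D (Dt F) (\<sigma>, \<xi>) (0, v)))) (at \<xi> within U)"
    by (intro has_derivative_add has_derivative_xi[OF F a(1) U(4,3)]
        has_derivative_xi_integral[OF smooth_on_Dt[OF F] assms(3) U(2,4,3)])
  then have "((\<lambda>\<zeta>. F (\<tau>, \<zeta>)) has_derivative
      (\<lambda>v. D F (a, \<xi>) (0, v) + integral {a..\<tau>} (\<lambda>\<sigma>. D (Dt F) (\<sigma>, \<xi>) (0, v)))) (at \<xi>)"
    unfolding at_within_open[OF U(3,1)]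
    by (rule has_derivative_transform_within_open[OF _ U(1,3)])
      (use tau_fundamental_theorem[OF F assms(2,3)] U(4) in auto)
  moreover have "((\<lambda>\<zeta>. F (\<tau>, \<zeta>)) has_derivative (\<lambda>v. D F (\<tau>, \<xi>) (0, v))) (at \<xi>)"
    using has_derivative_xi[OF F a(2) U(4,3)] by (simp add: at_within_open[OF U(3,1)])
  ultimately have "(\<lambda>v. D F (\<tau>, \<xi>) (0, v))
      = (\<lambda>v. D F (a, \<xi>) (0, v) + integral {a..\<tau>} (\<lambda>\<sigma>. D (Dt F) (\<sigma>, \<xi>) (0, v)))"
    by (rule has_derivative_unique[rotated])
  then show ?thesis by (rule fun_cong)
qed

text \<open>Symmetry of the mixed partial derivatives: integrate in \<open>\<tau>\<close>, differentiate under the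
  integral in \<open>\<xi>\<close>, and differentiate back in \<open>\<tau>\<close>.\<close>
lemma Dt_D_xi_commute:
  fixes F :: "real \<times> 'a \<Rightarrow> 'c::banach"
  assumes F: "smooth_on (I \<times> \<Omega>) F" and p: "p \<in> I \<times> \<Omega>"
  shows "Dt (\<lambda>q. D F q (0, w)) p = D (Dt F) p (0, w)"
proof -
  obtain \<tau> \<xi> where p': "p = (\<tau>, \<xi>)" "\<tau> \<in> I" "\<xi> \<in> \<Omega>" using p by auto
  obtain a b where ab: "a \<le> \<tau>" "\<tau> \<le> b" "a < b" "{a..b} \<subseteq> I"
    using interval_around[OF p'(2)] by blast
  have "((\<lambda>\<sigma>. D F (\<sigma>, \<xi>) (0, w)) has_vector_derivative Dt (\<lambda>q. D F q (0, w)) p) (at \<tau> within {a..b})"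
    using has_vector_derivative_tau[OF smooth_on_D[OF F] p'(2,3)] p'(1)
    by (auto intro: has_vector_derivative_within_subset[OF _ ab(4)])
  moreover have "((\<lambda>\<sigma>. D F (\<sigma>, \<xi>) (0, w)) has_vector_derivative D (Dt F) p (0, w)) (at \<tau> within {a..b})"
  proof (rule has_vector_derivative_transform)
    show "\<tau> \<in> {a..b}" using ab by simp
    show "D F (\<sigma>, \<xi>) (0, w) = D F (a, \<xi>) (0, w) + integral {a..\<sigma>} (\<lambda>\<sigma>. D (Dt F) (\<sigma>, \<xi>) (0, w))"
      if "\<sigma> \<in> {a..b}" for \<sigma>
      using that ab(4) by (intro D_xi_tau_integral[OF F _ _ p'(3)]) auto
    have "continuous_on {a..b} (\<lambda>\<sigma>. D (Dt F) (\<sigma>, \<xi>) (0, w))"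
      by (rule continuous_on_tau_slice[OF smooth_on_D[OF smooth_on_Dt[OF F]] ab(4) p'(3)])
    from has_vector_derivative_add[OF has_vector_derivative_const integral_has_vector_derivative[OF this]]
    show "((\<lambda>\<sigma>. D F (a, \<xi>) (0, w) + integral {a..\<sigma>} (\<lambda>\<sigma>. D (Dt F) (\<sigma>, \<xi>) (0, w)))
        has_vector_derivative D (Dt F) p (0, w)) (at \<tau> within {a..b})"
      using ab p'(1) by simp
  qed
  moreover have "at \<tau> within {a..b} \<noteq> bot"
    using ab by (simp add: trivial_limit_within)
  ultimately show ?thesis by (rule vector_derivative_unique_within[rotated])
qed

lemma D_xi_expansion:
  assumes "smooth_on (I \<times> \<Omega>) F" "p \<in> I \<times> \<Omega>"
  shows "D F p (0, w) = (\<Sum>b\<in>Basis. (w \<bullet> b) *\<^sub>R D F p (0, b))"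
proof -
  have "linear (\<lambda>w::'a. (0::real, w))" by (auto simp: linear_iff)
  then have "linear (\<lambda>w. D F p (0, w))"
    using linear_compose[OF _ linear_D[OF assms]] by (simp add: o_def)
  then show ?thesis by (rule linear_euclidean_expansion)
qed

lemma smooth_on_D_xi_apply:
  assumes "smooth_on (I \<times> \<Omega>) F" "smooth_on (I \<times> \<Omega>) g"
  shows "smooth_on (I \<times> \<Omega>) (\<lambda>q. D F q (0, g q))"
proof -
  have "smooth_on (I \<times> \<Omega>) (\<lambda>q. \<Sum>b\<in>Basis. (g q \<bullet> b) *\<^sub>R D F q (0, b))"
    by (intro smooth_on_sum smooth_on_scaleR smooth_on_bounded_linear[OF bounded_linear_inner_left]
        smooth_on_D assms) simp
  then show ?thesis by (rule smooth_on_cong) (simp add: D_xi_expansion assms)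
qed

lemma Dt_D_xi_apply:
  fixes G :: "real \<times> 'a \<Rightarrow> 'c::banach"
  assumes G: "smooth_on (I \<times> \<Omega>) G" and g: "smooth_on (I \<times> \<Omega>) g" and p: "p \<in> I \<times> \<Omega>"
  shows "Dt (\<lambda>q. D G q (0, g q)) p = D (Dt G) p (0, g p) + D G p (0, Dt g p)"
proof -
  have gb: "smooth_on (I \<times> \<Omega>) (\<lambda>q. g q \<bullet> b)" for b
    by (rule smooth_on_bounded_linear[OF bounded_linear_inner_left g])
  have Gb: "smooth_on (I \<times> \<Omega>) (\<lambda>q. D G q (0, b))" for b
    by (rule smooth_on_D[OF G])
  have "Dt (\<lambda>q. D G q (0, g q)) p = Dt (\<lambda>q. \<Sum>b\<in>Basis. (g q \<bullet> b) *\<^sub>R D G q (0, b)) p"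
    by (rule Dt_cong[OF p]) (rule D_xi_expansion[OF G])
  also have "\<dots> = (\<Sum>b\<in>Basis. (g p \<bullet> b) *\<^sub>R Dt (\<lambda>q. D G q (0, b)) p + (Dt g p \<bullet> b) *\<^sub>R D G p (0, b))"
    by (simp add: Dt_sum Dt_scaleR Dt_bounded_linear[OF bounded_linear_inner_left g p] gb Gb
        smooth_on_scaleR p)
  also have "\<dots> = (\<Sum>b\<in>Basis. (g p \<bullet> b) *\<^sub>R D (Dt G) p (0, b)) + (\<Sum>b\<in>Basis. (Dt g p \<bullet> b) *\<^sub>R D G p (0, b))"
    by (simp add: Dt_D_xi_commute[OF G p] sum.distrib)
  also have "\<dots> = D (Dt G) p (0, g p) + D G p (0, Dt g p)"
    by (simp only: D_xi_expansion[OF smooth_on_Dt[OF G] p, symmetric] D_xi_expansion[OF G p, symmetric])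
  finally show ?thesis .
qed

lemma Dt_pow_D_xi_apply:
  fixes G :: "real \<times> 'a \<Rightarrow> 'c::banach"
  assumes G: "smooth_on (I \<times> \<Omega>) G" and h: "smooth_on (I \<times> \<Omega>) h"
  shows "p \<in> I \<times> \<Omega> \<Longrightarrow> (Dt ^^ n) (\<lambda>q. D G q (0, h q)) p
      = (\<Sum>k\<le>n. of_nat (n choose k) *\<^sub>R D ((Dt ^^ k) G) p (0, (Dt ^^ (n - k)) h p))"
proof (induction n arbitrary: p)
  case 0 then show ?case by simp
next
  case (Suc n)
  let ?Q = "\<lambda>k q. D ((Dt ^^ k) G) q (0, (Dt ^^ (n - k)) h q)"
  have Q: "smooth_on (I \<times> \<Omega>) (?Q k)" for k
    by (intro smooth_on_D_xi_apply smooth_on_Dt_pow G h)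
  have "(Dt ^^ Suc n) (\<lambda>q. D G q (0, h q)) p = Dt (\<lambda>q. \<Sum>k\<le>n. of_nat (n choose k) *\<^sub>R ?Q k q) p"
    using Dt_cong[OF Suc.prems Suc.IH] by simp
  also have "\<dots> = (\<Sum>k\<le>n. of_nat (n choose k) *\<^sub>R Dt (?Q k) p)"
    by (simp add: Dt_sum Dt_bounded_linear[OF bounded_linear_scaleR_right Q Suc.prems] Q
        smooth_on_bounded_linear[OF bounded_linear_scaleR_right] Suc.prems)
  also have "\<dots> = (\<Sum>k\<le>n. of_nat (n choose k) *\<^sub>R
       (D ((Dt ^^ Suc k) G) p (0, (Dt ^^ (n - k)) h p) + D ((Dt ^^ k) G) p (0, (Dt ^^ Suc (n - k)) h p)))"
    by (simp add: Dt_D_xi_apply[OF smooth_on_Dt_pow[OF G] smooth_on_Dt_pow[OF h] Suc.prems])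
  also have "\<dots> = (\<Sum>k\<le>Suc n. of_nat (Suc n choose k) *\<^sub>R D ((Dt ^^ k) G) p (0, (Dt ^^ (Suc n - k)) h p))"
    by (rule binomial_sum_Suc[where f = "\<lambda>k j. D ((Dt ^^ k) G) p (0, (Dt ^^ j) h p)"])
  finally show ?case .
qed

lemma frechet_derivative_tau_slice:
  assumes "smooth_on (I \<times> \<Omega>) F" "s \<in> I" "\<xi> \<in> \<Omega>" "\<And>\<zeta>. \<zeta> \<in> \<Omega> \<Longrightarrow> f \<zeta> = F (s, \<zeta>)"
  shows "frechet_derivative f (at \<xi>) = (\<lambda>w. D F (s, \<xi>) (0, w))"
proof -
  have "((\<lambda>\<zeta>. F (s, \<zeta>)) has_derivative (\<lambda>w. D F (s, \<xi>) (0, w))) (at \<xi>)"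
    using has_derivative_xi[OF assms(1,2) order_refl assms(3)] at_within_open[OF assms(3) open_\<Omega>]
    by simp
  then have "(f has_derivative (\<lambda>w. D F (s, \<xi>) (0, w))) (at \<xi>)"
    by (rule has_derivative_transform_within_open[OF _ open_\<Omega> assms(3)]) (simp add: assms(4))
  then show ?thesis by (simp add: frechet_derivative_at[symmetric])
qed

text \<open>The derivative along the vector field \<open>(1, h)\<close>; iterating it on \<open>h\<close> yields the
  higher derivatives of the flow.\<close>
definition lie_deriv :: "(real \<times> 'a \<Rightarrow> 'a) \<Rightarrow> (real \<times> 'a \<Rightarrow> 'a) \<Rightarrow> real \<times> 'a \<Rightarrow> 'a" where
  "lie_deriv h G q = Dt G q + D G q (0, h q)"

lemma lie_deriv_eq: "lie_deriv h G = (\<lambda>q. Dt G q + D G q (0, h q))"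
  by (rule ext) (rule lie_deriv_def)

lemma smooth_on_lie_deriv_pow:
  "smooth_on (I \<times> \<Omega>) h \<Longrightarrow> smooth_on (I \<times> \<Omega>) G \<Longrightarrow> smooth_on (I \<times> \<Omega>) ((lie_deriv h ^^ i) G)"
  by (induction i) (auto simp: lie_deriv_eq intro!: smooth_on_add smooth_on_Dt smooth_on_D_xi_apply)

lemma nth_vderiv_flow:
  assumes h: "smooth_on (I \<times> \<Omega>) h"
    and y_in: "\<And>\<tau>. \<tau> \<in> I \<Longrightarrow> y \<tau> \<in> \<Omega>"
    and y_ode: "\<And>\<tau>. \<tau> \<in> I \<Longrightarrow> (y has_vector_derivative h (\<tau>, y \<tau>)) (at \<tau> within I)"
  shows "\<tau> \<in> I \<Longrightarrow> nth_vderiv (Suc j) I y \<tau> = (lie_deriv h ^^ j) h (\<tau>, y \<tau>)"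
proof (induction j arbitrary: \<tau>)
  case 0
  then show ?case
    using vector_derivative_within[OF at_within_I_nontrivial y_ode] by (simp add: nth_vderiv_def)
next
  case (Suc j)
  let ?G = "(lie_deriv h ^^ j) h"
  have G: "smooth_on (I \<times> \<Omega>) ?G" by (rule smooth_on_lie_deriv_pow[OF h h])
  have "((\<lambda>\<tau>. (\<tau>, y \<tau>)) has_vector_derivative (1, h (\<tau>, y \<tau>))) (at \<tau> within I)"
    by (intro has_vector_derivative_Pair has_vector_derivative_id y_ode Suc.prems)
  from has_vector_derivative_along_curve[OF G Suc.prems _ this]
  have "((\<lambda>\<tau>. ?G (\<tau>, y \<tau>)) has_vector_derivative D ?G (\<tau>, y \<tau>) (1, h (\<tau>, y \<tau>))) (at \<tau> within I)"
    using y_in by simp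
  then have "(nth_vderiv (Suc j) I y has_vector_derivative D ?G (\<tau>, y \<tau>) (1, h (\<tau>, y \<tau>))) (at \<tau> within I)"
    by (rule has_vector_derivative_transform[OF Suc.prems, rotated]) (rule Suc.IH)
  moreover have "D ?G (\<tau>, y \<tau>) (1, h (\<tau>, y \<tau>)) = (lie_deriv h ^^ Suc j) h (\<tau>, y \<tau>)"
    using linear_add[OF linear_D[OF G], of "(\<tau>, y \<tau>)" "(1, 0)" "(0, h (\<tau>, y \<tau>))"] Suc.prems y_in
    by (simp add: lie_deriv_def Dt_def)
  ultimately show ?case
    using vector_derivative_within[OF at_within_I_nontrivial[OF Suc.prems]] by (simp add: nth_vderiv_def)
qed

lemma Fbr_eq_Dt_pow_lie_deriv:
  assumes h: "smooth_on (I \<times> \<Omega>) h" and "0 \<in> I"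
    and Hs: "\<And>n \<xi>. \<xi> \<in> \<Omega> \<Longrightarrow> Hs n \<xi> = (Dt ^^ n) h (0, \<xi>)"
  shows "\<xi> \<in> \<Omega> \<Longrightarrow> Fbr Hs Hs i n \<xi> = (Dt ^^ n) ((lie_deriv h ^^ i) h) (0, \<xi>)"
proof (induction i arbitrary: n \<xi>)
  case 0
  then show ?case by (simp add: Hs)
next
  case (Suc i)
  let ?G = "(lie_deriv h ^^ i) h"
  have G: "smooth_on (I \<times> \<Omega>) ?G" by (rule smooth_on_lie_deriv_pow[OF h h])
  have p: "(0, \<xi>) \<in> I \<times> \<Omega>" using Suc.prems \<open>0 \<in> I\<close> by simp
  have "frechet_derivative (Fbr Hs Hs i k) (at \<xi>) = (\<lambda>w. D ((Dt ^^ k) ?G) (0, \<xi>) (0, w))" for k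
    by (rule frechet_derivative_tau_slice[OF smooth_on_Dt_pow[OF G] \<open>0 \<in> I\<close> Suc.prems Suc.IH])
  then have "(\<Sum>k\<le>n. of_nat (n choose k) *\<^sub>R frechet_derivative (Fbr Hs Hs i k) (at \<xi>) (Hs (n - k) \<xi>))
      = (\<Sum>k\<le>n. of_nat (n choose k) *\<^sub>R D ((Dt ^^ k) ?G) (0, \<xi>) (0, (Dt ^^ (n - k)) h (0, \<xi>)))"
    by (simp add: Hs[OF Suc.prems])
  moreover have "Fbr Hs Hs i (Suc n) \<xi> = (Dt ^^ n) (Dt ?G) (0, \<xi>)"
    by (simp only: Suc.IH[OF Suc.prems] funpow.simps(2) comp_apply funpow_swap1)
  ultimately have "Fbr Hs Hs (Suc i) n \<xi> = (Dt ^^ n) (Dt ?G) (0, \<xi>)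
      + (\<Sum>k\<le>n. of_nat (n choose k) *\<^sub>R D ((Dt ^^ k) ?G) (0, \<xi>) (0, (Dt ^^ (n - k)) h (0, \<xi>)))"
    by simp
  also have "\<dots> = (Dt ^^ n) (Dt ?G) (0, \<xi>) + (Dt ^^ n) (\<lambda>q. D ?G q (0, h q)) (0, \<xi>)"
    by (simp add: Dt_pow_D_xi_apply[OF G h p])
  also have "\<dots> = (Dt ^^ n) ((lie_deriv h ^^ Suc i) h) (0, \<xi>)"
    by (simp add: lie_deriv_eq Dt_pow_add[OF smooth_on_Dt[OF G] smooth_on_D_xi_apply[OF G h] p])
  finally show ?case .
qed

lemma nth_vderiv_flow_eq_Htrans_coeff:
  assumes h: "smooth_on (I \<times> \<Omega>) h" and "0 \<in> I"
    and Hs: "\<And>n \<xi>. \<xi> \<in> \<Omega> \<Longrightarrow> Hs n \<xi> = nth_vderiv n I (\<lambda>\<tau>. h (\<tau>, \<xi>)) 0"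
    and y_in: "\<And>\<tau>. \<tau> \<in> I \<Longrightarrow> y \<tau> \<in> \<Omega>"
    and y_ode: "\<And>\<tau>. \<tau> \<in> I \<Longrightarrow> (y has_vector_derivative h (\<tau>, y \<tau>)) (at \<tau> within I)"
  shows "nth_vderiv m I y 0 = (if m = 0 then y 0 else 0) + Htrans_coeff Hs Hs m (y 0)"
proof (cases m)
  case 0
  then show ?thesis by (simp add: nth_vderiv_def Htrans_coeff_def)
next
  case (Suc j)
  have "Hs n \<xi> = (Dt ^^ n) h (0, \<xi>)" if "\<xi> \<in> \<Omega>" for n \<xi>
    using Hs[OF that] nth_vderiv_tau_slice[OF h that \<open>0 \<in> I\<close>] by simp
  from Fbr_eq_Dt_pow_lie_deriv[OF h \<open>0 \<in> I\<close> this y_in[OF \<open>0 \<in> I\<close>], of j 0]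
  have "Fbr Hs Hs j 0 (y 0) = (lie_deriv h ^^ j) h (0, y 0)" by simp
  moreover have "nth_vderiv (Suc j) I y 0 = (lie_deriv h ^^ j) h (0, y 0)"
    by (rule nth_vderiv_flow[OF h y_in y_ode \<open>0 \<in> I\<close>])
  ultimately show ?thesis using Suc by (simp add: Htrans_coeff_def)
qed

end

theorem theorem2p9:
  fixes \<Omega> :: "'a::euclidean_space set" and I :: "real set"
    and H :: "real \<Rightarrow> real \<Rightarrow> 'a \<Rightarrow> 'a"
    and Hn :: "real \<Rightarrow> nat \<Rightarrow> 'a \<Rightarrow> 'a"
    and xi :: "real \<Rightarrow> 'a \<Rightarrow> real \<Rightarrow> 'a"
  assumes "open \<Omega>"
    and "is_interval I" and "0 \<in> I" and "\<exists>s\<in>I. s \<noteq> 0"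
    and smooth: "\<And>t. t > 0 \<Longrightarrow> smooth_on (I \<times> \<Omega>) (\<lambda>(\<tau>, \<xi>). H t \<tau> \<xi>)"
    and series: "\<And>t n \<xi>. t > 0 \<Longrightarrow> \<xi> \<in> \<Omega> \<Longrightarrow> Hn t n \<xi> = nth_vderiv n I (\<lambda>\<tau>. H t \<tau> \<xi>) 0"
    and flow_init: "\<And>t x. t > 0 \<Longrightarrow> x \<in> \<Omega> \<Longrightarrow> xi t x 0 = x"
    and flow_in: "\<And>t x \<tau>. t > 0 \<Longrightarrow> x \<in> \<Omega> \<Longrightarrow> \<tau> \<in> I \<Longrightarrow> xi t x \<tau> \<in> \<Omega>"
    and flow_ode: "\<And>t x \<tau>. t > 0 \<Longrightarrow> x \<in> \<Omega> \<Longrightarrow> \<tau> \<in> I \<Longrightarrow>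
        (xi t x has_vector_derivative H t \<tau> (xi t x \<tau>)) (at \<tau> within I)"
  shows "\<forall>t>0. \<forall>x\<in>\<Omega>. \<forall>m.
     nth_vderiv m I (xi t x) 0 = (if m = 0 then x else 0) + Htrans_coeff (Hn t) (Hn t) m x"
proof (intro allI impI ballI)
  fix t :: real and x m
  assume t: "t > 0" and x: "x \<in> \<Omega>"
  obtain s where "s \<in> I" "s \<noteq> 0" using assms(4) by blast
  then have "\<exists>a\<in>I. \<exists>b\<in>I. a < b"
    using assms(3) by (metis linorder_neq_iff)
  then interpret interval_slab I \<Omega>
    using assms(1,2) by unfold_locales
  have "nth_vderiv m I (xi t x) 0 = (if m = 0 then xi t x 0 else 0) + Htrans_coeff (Hn t) (Hn t) m (xi t x 0)"
  proof (rule nth_vderiv_flow_eq_Htrans_coeff[where h = "\<lambda>(\<tau>, \<xi>). H t \<tau> \<xi>"])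
    show "smooth_on (I \<times> \<Omega>) (\<lambda>(\<tau>, \<xi>). H t \<tau> \<xi>)" by (rule smooth[OF t])
    show "Hn t n \<xi> = nth_vderiv n I (\<lambda>\<tau>. case (\<tau>, \<xi>) of (\<tau>, \<xi>) \<Rightarrow> H t \<tau> \<xi>) 0"
      if "\<xi> \<in> \<Omega>" for n \<xi>
      using series[OF t that] by simp
    show "xi t x \<tau> \<in> \<Omega>" if "\<tau> \<in> I" for \<tau>
      by (rule flow_in[OF t x that])
    show "(xi t x has_vector_derivative (case (\<tau>, xi t x \<tau>) of (\<tau>, \<xi>) \<Rightarrow> H t \<tau> \<xi>)) (at \<tau> within I)"
      if "\<tau> \<in> I" for \<tau>
      using flow_ode[OF t x that] by simp
  qed (rule assms(3))
  then show "nth_vderiv m I (xi t x) 0 = (if m = 0 then x else 0) + Htrans_coeff (Hn t) (Hn t) m x"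
    by (simp add: flow_init[OF t x])
qed

end
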